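(* Let $U_n\in(\mathcal{V}_0)^N\cap\mathcal{M}_{\leqslant}^{N;N_g}$ be an iterate of the quasi-orthogonal scheme described in the context, with step size $s_n<\frac{2}{|\lambda_1-\lambda_{\max}|}$, and let $U_{n+1}$ be produced from $U_n$ by one step of that scheme. Then the components of $U_{n+1}$ are linearly independent, i.e. $U_{n+1}^\top U_{n+1}>0$.
   Context: Let $\mathcal{V}^{N_g}$ be a real Hilbert space of finite dimension $N_g$ with inner product $(\cdot,\cdot)$ (in the paper a finite element subspace of $H_0^1(\Omega)$ with the $L^2(\Omega)$ inner product), and let $H:\mathcal{V}^{N_g}\to\mathcal{V}^{N_g}$ be a self-adjoint linear operator with smallest eigenvalue $\lambda_1$ and largest eigenvalue $\lambda_{\max}$; it is assumed that $\lambda_1<0$. Fix $N\in\mathbb{N}_+$. Elements of $(\mathcal{V}^{N_g})^N$ are written $U=(u_1,\dots,u_N)$; $U^\top V=((u_i,v_j))_{i,j=1}^N$; for a real $N\times N$ matrix $A=(a_{kj})$, $UA$ is the element whose $j$-th component is $\sum_k a_{kj}u_k$; $HU=(Hu_1,\dots,Hu_N)$. For symmetric matrices, $A\leqslant B$ means $B-A$ is positive semidefinite and $A>0$ means positive definite. Set $\nabla E(U)=HU$. For $U\in(\mathcal{V}^{N_g})^N$, $\mathcal{A}_U=\nabla E(U)U^\top-U\nabla E(U)^\top$ is the linear operator on $\mathcal{V}^{N_g}$ given by $\mathcal{A}_Uw=\sum_{i=1}^N\big(Hu_i\,(u_i,w)-u_i\,(Hu_i,w)\big)$, applied componentwise to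 elements of $(\mathcal{V}^{N_g})^N$. The quasi-Stiefel set is $\mathcal{M}_{\leqslant}^{N;N_g}=\{U:0<U^\top U\leqslant I_N\}$. Quasi-orthogonal scheme: given step sizes $s_n>0$ with $\sum_n s_n=+\infty$ and initial data $U_0$, $\hat U_{n+1}$ satisfies $\hat U_{n+1}=U_n-s_n\mathcal{A}_{\tilde U_{n+\frac12}}\tilde U_{n+\frac12}$ with $\tilde U_{n+\frac12}=\frac{U_n+\hat U_{n+1}}{2}$, and $U_{n+1}=\hat U_{n+1}-s_n\nabla E(\hat U_{n+1})(I_N-\hat U_{n+1}^\top\hat U_{n+1})$. For $j=1,\dots,N$, let $\mathcal{V}_{0_j}=\operatorname{span}\{v_{j,1},\dots,v_{j,d_j}\}$ ($d_j\geqslant1$) with each $v_{j,k}$ an eigenvector of $H$, and $(\mathcal{V}_0)^N=\mathcal{V}_{0_1}\times\cdots\times\mathcal{V}_{0_N}$. Let $\lambda_{\max}^0=\max_{j,k}\frac{(v_{j,k},Hv_{j,k})}{(v_{j,k},v_{j,k})}$. Standing assumption: $\lambda_{\max}^0\leqslant 0$. *)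

theory Defs
  imports "HOL-Analysis.Analysis"
begin

text \<open>The finite-dimensional real Hilbert space is a type 'v of class
euclidean_space (inner product written with bullet). Elements of (V)^N are functions
nat => 'v of which only the components with index i < N matter (components
u_1..u_N are indexed 0..N-1). Real N x N matrices are functions nat => nat => real,
again only entries with indices < N matter.\<close>

definition gram :: "nat \<Rightarrow> (nat \<Rightarrow> 'v::real_inner) \<Rightarrow> (nat \<Rightarrow> 'v) \<Rightarrow> nat \<Rightarrow> nat \<Rightarrow> real" where
  "gram N U V i j = inner (U i) (V j)"

definition idm :: "nat \<Rightarrow> nat \<Rightarrow> real" where
  "idm i j = (if i = j then 1 else 0)"

definition psd :: "nat \<Rightarrow> (nat \<Rightarrow> nat \<Rightarrow> real) \<Rightarrow> bool" where
  "psd N A \<longleftrightarrow> (\<forall>i<N. \<forall>j<N. A i j = A j i) \<and>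
     (\<forall>c::nat \<Rightarrow> real. 0 \<le> (\<Sum>i<N. \<Sum>j<N. c i * A i j * c j))"

definition pd :: "nat \<Rightarrow> (nat \<Rightarrow> nat \<Rightarrow> real) \<Rightarrow> bool" where
  "pd N A \<longleftrightarrow> (\<forall>i<N. \<forall>j<N. A i j = A j i) \<and>
     (\<forall>c::nat \<Rightarrow> real. (\<exists>i<N. c i \<noteq> 0) \<longrightarrow> 0 < (\<Sum>i<N. \<Sum>j<N. c i * A i j * c j))"

text \<open>U A : the j-th component is sum_k a_kj u_k.\<close>
definition mat_act :: "nat \<Rightarrow> (nat \<Rightarrow> 'v::real_vector) \<Rightarrow> (nat \<Rightarrow> nat \<Rightarrow> real) \<Rightarrow> nat \<Rightarrow> 'v" where
  "mat_act N U A j = (\<Sum>k<N. A k j *\<^sub>R U k)"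

definition opA :: "nat \<Rightarrow> ('v::real_inner \<Rightarrow> 'v) \<Rightarrow> (nat \<Rightarrow> 'v) \<Rightarrow> 'v \<Rightarrow> 'v" where
  "opA N H U w = (\<Sum>i<N. inner (U i) w *\<^sub>R H (U i) - inner (H (U i)) w *\<^sub>R U i)"

definition quasi_stiefel :: "nat \<Rightarrow> (nat \<Rightarrow> 'v::real_inner) \<Rightarrow> bool" where
  "quasi_stiefel N U \<longleftrightarrow> pd N (gram N U U) \<and> psd N (\<lambda>i j. idm i j - gram N U U i j)"

definition is_eigenvalue :: "('v::real_vector \<Rightarrow> 'v) \<Rightarrow> real \<Rightarrow> bool" where
  "is_eigenvalue H \<mu> \<longleftrightarrow> (\<exists>v. v \<noteq> 0 \<and> H v = \<mu> *\<^sub>R v)"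

definition is_eigenvector :: "('v::real_vector \<Rightarrow> 'v) \<Rightarrow> 'v \<Rightarrow> bool" where
  "is_eigenvector H v \<longleftrightarrow> v \<noteq> 0 \<and> (\<exists>\<mu>. H v = \<mu> *\<^sub>R v)"

definition qo_half_step :: "nat \<Rightarrow> ('v::real_inner \<Rightarrow> 'v) \<Rightarrow> real \<Rightarrow> (nat \<Rightarrow> 'v) \<Rightarrow> (nat \<Rightarrow> 'v) \<Rightarrow> bool" where
  "qo_half_step N H s U Uh \<longleftrightarrow>
     (\<forall>j<N. Uh j = U j - s *\<^sub>R opA N H (\<lambda>i. (1/2) *\<^sub>R (U i + Uh i)) ((1/2) *\<^sub>R (U j + Uh j)))"

text \<open>Correction step: U_{n+1} = Uhat - s grad E(Uhat) (I - Uhat^T Uhat), grad E(U) = H U.\<close>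
definition qo_correction :: "nat \<Rightarrow> ('v::real_inner \<Rightarrow> 'v) \<Rightarrow> real \<Rightarrow> (nat \<Rightarrow> 'v) \<Rightarrow> nat \<Rightarrow> 'v" where
  "qo_correction N H s Uh j =
     Uh j - s *\<^sub>R mat_act N (\<lambda>k. H (Uh k)) (\<lambda>k l. idm k l - gram N Uh Uh k l) j"

end

theory Submission
  imports Defs
begin

(* Let W be the span of the eigenvectors spanning V_0: it is H-invariant and H <= 0 on W.
   Since A_U is skew, the half step preserves the Gram matrix, so Uh is again in the
   quasi-Stiefel set. Split Uh = y + z with y in W and z orthogonal to W. Pairing the half
   step with z gives 2|z|^2 = s (<<H Ut, Ut>, <z, z>> - <<Ut, Ut>, <z, H z>>), where Ut is the
   midpoint and <<G, K>> = sum_ij G_ij K_ij; Schur-product positivity, lam1 <= H <= lammax and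
   Ut^T Ut <= I bound this by s (lammax - lam1) |z|^2, so the step-size condition forces z = 0,
   i.e. Uh lies in W. For the correction step, if U_{n+1} c = 0 then a = Uh c equals s H b with
   b = (I - Uh Uh^T) a in W. Now (a, b) >= 0 because Uh^T Uh <= I, while (a, b) = s (b, H b) <= 0;
   hence (b, H b) = 0, so H b = 0 as H <= 0 on W, and a = 0 forces c = 0. *)

definition lincomb :: "nat \<Rightarrow> (nat \<Rightarrow> 'v::real_vector) \<Rightarrow> (nat \<Rightarrow> real) \<Rightarrow> 'v" where
  "lincomb N U c = (\<Sum>k<N. c k *\<^sub>R U k)"

lemma lincomb_diff: "lincomb N U c - lincomb N U d = lincomb N U (\<lambda>k. c k - d k)"
  by (simp add: lincomb_def scaleR_diff_left sum_subtractf)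

lemma lincomb_diff_scaleR:
  "lincomb N (\<lambda>j. U j - s *\<^sub>R V j) c = lincomb N U c - s *\<^sub>R lincomb N V c"
  by (simp add: lincomb_def scaleR_diff_right sum_subtractf scaleR_sum_right mult.commute)

lemma lincomb_cong: "(\<And>k. k < N \<Longrightarrow> c k = d k) \<Longrightarrow> lincomb N U c = lincomb N U d"
  by (simp add: lincomb_def)

lemma lincomb_linear_image:
  assumes "linear Q"
  shows "lincomb N (\<lambda>k. Q (U k)) c = Q (lincomb N U c)"
  by (simp add: lincomb_def linear_sum[OF assms] linear_scale[OF assms] o_def)

lemma lincomb_mat_act:
  "lincomb N (mat_act N U A) c = lincomb N U (\<lambda>k. \<Sum>j<N. A k j * c j)"
  unfolding lincomb_def mat_act_def
  by (simp add: scaleR_sum_right scaleR_sum_left mult.commute, rule sum.swap)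

lemma lincomb_in_subspace: "subspace W \<Longrightarrow> \<forall>k<N. U k \<in> W \<Longrightarrow> lincomb N U c \<in> W"
  unfolding lincomb_def by (intro subspace_sum subspace_scale) auto

lemma inner_lincomb_left: "inner (lincomb N U c) x = (\<Sum>k<N. c k * inner (U k) x)"
  by (simp add: lincomb_def inner_sum_left)

lemma inner_lincomb_right: "inner x (lincomb N U c) = (\<Sum>k<N. c k * inner x (U k))"
  by (simp add: lincomb_def inner_sum_right)

lemma qform_gram:
  "(\<Sum>i<N. \<Sum>j<N. c i * gram N U V i j * c j) = inner (lincomb N U c) (lincomb N V c)"
  unfolding gram_def lincomb_def
  by (simp add: inner_sum_left inner_sum_right sum_distrib_left, subst sum.swap) (simp add: mult_ac)

lemma sum_idm: "i < N \<Longrightarrow> (\<Sum>j<N. f j * idm i j) = f i"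
  by (simp add: idm_def if_distrib[of "(*) _"] cong: if_cong)

lemma qform_id_minus_gram:
  "(\<Sum>i<N. \<Sum>j<N. c i * (idm i j - gram N U U i j) * c j) =
    (\<Sum>i<N. (c i)\<^sup>2) - (norm (lincomb N U c))\<^sup>2"
proof -
  have "(\<Sum>i<N. \<Sum>j<N. c i * idm i j * c j) = (\<Sum>i<N. (c i)\<^sup>2)"
    by (intro sum.cong refl)
      (simp add: sum_distrib_left[symmetric] mult.assoc mult.commute[of "idm _ _"] sum_idm power2_eq_square)
  then show ?thesis
    by (simp add: right_diff_distrib left_diff_distrib sum_subtractf qform_gram power2_norm_eq_inner)
qed

lemma psd_id_minus_gram_iff:
  "psd N (\<lambda>i j. idm i j - gram N U U i j) \<longleftrightarrow> (\<forall>c. (norm (lincomb N U c))\<^sup>2 \<le> (\<Sum>i<N. (c i)\<^sup>2))"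
  unfolding psd_def qform_id_minus_gram by (simp add: idm_def gram_def inner_commute)

lemma pd_gram_iff:
  "pd N (gram N U U) \<longleftrightarrow> (\<forall>c. lincomb N U c = 0 \<longrightarrow> (\<forall>i<N. c i = 0))"
  unfolding pd_def qform_gram by (auto simp: gram_def inner_commute)

lemma gram_pairing_nonneg:
  fixes p :: "nat \<Rightarrow> 'v::euclidean_space"
  assumes K_psd: "\<forall>c. 0 \<le> (\<Sum>i<N. \<Sum>j<N. c i * K i j * c j)"
  shows "0 \<le> (\<Sum>i<N. \<Sum>j<N. inner (p i) (p j) * K i j)"
proof -
  have "inner (p i) (p j) * K i j = (\<Sum>b\<in>Basis. inner (p i) b * K i j * inner (p j) b)" for i j
    by (simp add: euclidean_inner[of "p i" "p j"] sum_distrib_left mult_ac)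
  then have "(\<Sum>i<N. \<Sum>j<N. inner (p i) (p j) * K i j) =
    (\<Sum>i<N. \<Sum>b\<in>Basis. \<Sum>j<N. inner (p i) b * K i j * inner (p j) b)"
    by (simp add: sum.swap[of _ "{..<N}" Basis])
  also have "\<dots> = (\<Sum>b\<in>Basis. \<Sum>i<N. \<Sum>j<N. inner (p i) b * K i j * inner (p j) b)"
    by (rule sum.swap)
  also have "\<dots> \<ge> 0"
    by (rule sum_nonneg) (rule K_psd[rule_format])
  finally show ?thesis .
qed

lemma gram_pairing_operator_nonneg:
  fixes p q :: "nat \<Rightarrow> 'v::euclidean_space"
  assumes "linear Q" and "\<forall>x. 0 \<le> inner x (Q x)"
  shows "0 \<le> (\<Sum>i<N. \<Sum>j<N. inner (p i) (p j) * inner (q i) (Q (q j)))"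
proof (rule gram_pairing_nonneg, intro allI)
  fix c
  have "(\<Sum>i<N. \<Sum>j<N. c i * inner (q i) (Q (q j)) * c j) =
      inner (lincomb N q c) (Q (lincomb N q c))"
    using qform_gram[of c N q "\<lambda>k. Q (q k)"] by (simp add: gram_def lincomb_linear_image[OF \<open>linear Q\<close>])
  then show "0 \<le> (\<Sum>i<N. \<Sum>j<N. c i * inner (q i) (Q (q j)) * c j)"
    using assms(2) by simp
qed

lemma frame_sum_le_of_gram_le_id:
  assumes "\<forall>c. (norm (lincomb N U c))\<^sup>2 \<le> (\<Sum>i<N. (c i)\<^sup>2)"
  shows "(\<Sum>k<N. (inner (U k) x)\<^sup>2) \<le> (norm x)\<^sup>2"
proof -
  define e where "e k = inner (U k) x" for k
  define E where "E = (\<Sum>k<N. (e k)\<^sup>2)"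
  have "0 \<le> E"
    unfolding E_def by (simp add: sum_nonneg)
  have "E = inner (lincomb N U e) x"
    unfolding E_def inner_lincomb_left e_def by (simp add: power2_eq_square)
  also have "\<dots> \<le> norm (lincomb N U e) * norm x"
    by (rule norm_cauchy_schwarz)
  finally have "E\<^sup>2 \<le> (norm (lincomb N U e) * norm x)\<^sup>2"
    using \<open>0 \<le> E\<close> by (rule power_mono)
  also have "\<dots> = (norm (lincomb N U e))\<^sup>2 * (norm x)\<^sup>2"
    by (rule power_mult_distrib)
  also have "\<dots> \<le> E * (norm x)\<^sup>2"
    using assms unfolding E_def by (simp add: mult_right_mono)
  finally have "E * E \<le> E * (norm x)\<^sup>2"
    by (simp add: power2_eq_square)
  then have "E \<le> (norm x)\<^sup>2"
    using \<open>0 \<le> E\<close> by (cases "E = 0") (simp_all add: mult_le_cancel_left_pos)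
  then show ?thesis
    unfolding E_def e_def .
qed

lemma inner_sub_frame_nonneg:
  assumes "\<forall>c. (norm (lincomb N U c))\<^sup>2 \<le> (\<Sum>i<N. (c i)\<^sup>2)"
  shows "0 \<le> inner x (x - lincomb N U (\<lambda>k. inner (U k) x))"
proof -
  have "inner x (lincomb N U (\<lambda>k. inner (U k) x)) = (\<Sum>k<N. (inner (U k) x)\<^sup>2)"
    by (simp add: inner_lincomb_right inner_commute[of x "U _"] power2_eq_square)
  then show ?thesis
    using frame_sum_le_of_gram_le_id[OF assms, of x] by (simp add: inner_diff_right power2_norm_eq_inner)
qed

lemma psd_form_zero_imp_orthogonal:
  fixes Q :: "'v::real_inner \<Rightarrow> 'v"
  assumes "linear Q" and self_adj: "\<forall>x y. inner (Q x) y = inner x (Q y)"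
    and "subspace W" and nonneg: "\<forall>w\<in>W. 0 \<le> inner w (Q w)"
    and "x \<in> W" "y \<in> W" and zero: "inner x (Q x) = 0"
  shows "inner y (Q x) = 0"
proof -
  define p where "p = inner y (Q x)"
  define K where "K = inner y (Q y)"
  have "inner x (Q y) = p"
    unfolding p_def by (metis self_adj inner_commute)
  then have expand: "inner (x - t *\<^sub>R y) (Q (x - t *\<^sub>R y)) = t\<^sup>2 * K - 2 * t * p" for t
    using zero unfolding p_def K_def
    by (simp add: linear_diff[OF \<open>linear Q\<close>] linear_scale[OF \<open>linear Q\<close>]
        inner_diff_left inner_diff_right power2_eq_square algebra_simps)
  define D where "D = \<bar>K\<bar> + 1"
  have "D > 0" "K - 2 * D < 0"
    unfolding D_def by auto
  have "x - (p / D) *\<^sub>R y \<in> W"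
    using \<open>subspace W\<close> \<open>x \<in> W\<close> \<open>y \<in> W\<close> by (simp add: subspace_diff subspace_scale)
  then have "0 \<le> (p / D)\<^sup>2 * K - 2 * (p / D) * p"
    using nonneg expand by metis
  also have "\<dots> = p\<^sup>2 * (K - 2 * D) / D\<^sup>2"
    using \<open>D > 0\<close> by (simp add: field_simps power2_eq_square)
  finally have "0 \<le> p\<^sup>2 * (K - 2 * D)"
    using \<open>D > 0\<close> by (simp add: zero_le_divide_iff)
  with \<open>K - 2 * D < 0\<close> have "p\<^sup>2 \<le> 0"
    by (simp add: zero_le_mult_iff)
  then show ?thesis
    unfolding p_def by simp
qed

lemma psd_form_zero_imp_kernel:
  fixes Q :: "'v::real_inner \<Rightarrow> 'v"
  assumes "linear Q" and "\<forall>x y. inner (Q x) y = inner x (Q y)"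
    and "subspace W" and "Q ` W \<subseteq> W" and "\<forall>w\<in>W. 0 \<le> inner w (Q w)"
    and "x \<in> W" and "inner x (Q x) = 0"
  shows "Q x = 0"
  using psd_form_zero_imp_orthogonal[OF assms(1-3,5,6) _ assms(7), of "Q x"] assms(4,6) by auto

lemma rayleigh_le_of_le_on_sphere:
  fixes H :: "'v::real_inner \<Rightarrow> 'v"
  assumes "linear H" and "\<forall>y\<in>sphere 0 1. inner y (H y) \<le> \<mu>"
  shows "inner x (H x) \<le> \<mu> * inner x x"
proof (cases "x = 0")
  case True
  then show ?thesis
    using \<open>linear H\<close> by (simp add: linear_0)
next
  case False
  then have "(1 / norm x) *\<^sub>R x \<in> sphere 0 1"
    by simp
  then have "inner ((1 / norm x) *\<^sub>R x) (H ((1 / norm x) *\<^sub>R x)) \<le> \<mu>"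
    using assms(2) by blast
  then show ?thesis
    using False by (simp add: linear_scale[OF \<open>linear H\<close>] power2_norm_eq_inner[symmetric]
        divide_le_eq power2_eq_square)
qed

lemma rayleigh_bounded_by_eigenvalue:
  fixes H :: "'v::euclidean_space \<Rightarrow> 'v"
  assumes "linear H" and self_adj: "\<forall>x y. inner (H x) y = inner x (H y)"
  obtains \<mu> where "is_eigenvalue H \<mu>" and "\<forall>x. inner x (H x) \<le> \<mu> * inner x x"
proof -
  have cont: "continuous_on (sphere 0 1) (\<lambda>x. inner x (H x))"
    using \<open>linear H\<close> by (intro continuous_intros) (simp add: linear_continuous_on linear_linear)
  obtain b :: 'v where "b \<in> Basis"
    using nonempty_Basis by blast
  then have "sphere (0::'v) 1 \<noteq> {}"
    by (metis empty_iff mem_sphere_0 norm_Basis)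
  then obtain x0 where x0: "x0 \<in> sphere 0 1"
    and x0_max: "\<forall>y\<in>sphere 0 1. inner y (H y) \<le> inner x0 (H x0)"
    using continuous_attains_sup[OF compact_sphere _ cont] by blast
  define \<mu> where "\<mu> = inner x0 (H x0)"
  have bound: "\<forall>x. inner x (H x) \<le> \<mu> * inner x x"
    using rayleigh_le_of_le_on_sphere[OF \<open>linear H\<close>] x0_max unfolding \<mu>_def by blast
  define Q where "Q x = \<mu> *\<^sub>R x - H x" for x
  have "linear Q"
    unfolding Q_def[abs_def] using \<open>linear H\<close>
    by (intro linear_compose_sub linear_compose_scale_right linear_ident)
  moreover have "\<forall>x y. inner (Q x) y = inner x (Q y)"
    unfolding Q_def using self_adj by (simp add: inner_diff_left inner_diff_right inner_commute)
  moreover have "\<forall>x\<in>UNIV. 0 \<le> inner x (Q x)"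
    using bound by (simp add: Q_def inner_diff_right)
  moreover have "inner x0 (Q x0) = 0"
    using x0 unfolding Q_def \<mu>_def by (simp add: inner_diff_right dot_square_norm)
  ultimately have "Q x0 = 0"
    using psd_form_zero_imp_kernel[of Q UNIV x0] by simp
  then have "H x0 = \<mu> *\<^sub>R x0"
    unfolding Q_def by simp
  moreover have "x0 \<noteq> 0"
    using x0 by auto
  ultimately have "is_eigenvalue H \<mu>"
    unfolding is_eigenvalue_def by blast
  with bound show ?thesis
    using that by blast
qed

lemma rayleigh_le_max_eigenvalue:
  fixes H :: "'v::euclidean_space \<Rightarrow> 'v"
  assumes "linear H" and "\<forall>x y. inner (H x) y = inner x (H y)"
    and max: "\<forall>\<mu>. is_eigenvalue H \<mu> \<longrightarrow> \<mu> \<le> m"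
  shows "inner x (H x) \<le> m * inner x x"
proof -
  obtain \<mu> where "is_eigenvalue H \<mu>" and bound: "\<forall>x. inner x (H x) \<le> \<mu> * inner x x"
    using rayleigh_bounded_by_eigenvalue assms(1,2) by blast
  then have "\<mu> * inner x x \<le> m * inner x x"
    using max by (intro mult_right_mono) simp_all
  with bound show ?thesis
    by (meson order_trans)
qed

lemma rayleigh_ge_min_eigenvalue:
  fixes H :: "'v::euclidean_space \<Rightarrow> 'v"
  assumes "linear H" and self_adj: "\<forall>x y. inner (H x) y = inner x (H y)"
    and min: "\<forall>\<mu>. is_eigenvalue H \<mu> \<longrightarrow> m \<le> \<mu>"
  shows "m * inner x x \<le> inner x (H x)"
proof -
  have "linear (\<lambda>x. - H x)"
    using \<open>linear H\<close> by (rule linear_compose_neg)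
  moreover have "\<forall>x y. inner (- H x) y = inner x (- H y)"
    using self_adj by simp
  moreover have "\<forall>\<mu>. is_eigenvalue (\<lambda>x. - H x) \<mu> \<longrightarrow> \<mu> \<le> - m"
    using min unfolding is_eigenvalue_def by (metis minus_minus neg_le_iff_le scaleR_minus_left)
  ultimately have "inner x (- H x) \<le> - m * inner x x"
    by (rule rayleigh_le_max_eigenvalue)
  then show ?thesis
    by simp
qed

lemma span_eigenvectors_invariant:
  fixes H :: "'v::real_vector \<Rightarrow> 'v"
  assumes "linear H" and "\<forall>v\<in>S. \<exists>\<mu>. H v = \<mu> *\<^sub>R v"
  shows "H ` span S \<subseteq> span S"
proof -
  have "H ` S \<subseteq> span S"
    using assms(2) span_base span_mul by (metis image_subsetI)
  then show ?thesis
    using span_linear_image[OF \<open>linear H\<close>] span_minimal[OF _ subspace_span] by metis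
qed

lemma eigenvectors_orthogonal:
  fixes H :: "'v::real_inner \<Rightarrow> 'v"
  assumes "\<forall>x y. inner (H x) y = inner x (H y)"
    and "H u = \<mu> *\<^sub>R u" "H v = \<nu> *\<^sub>R v" "\<mu> \<noteq> \<nu>"
  shows "inner u v = 0"
proof -
  have "\<mu> * inner u v = \<nu> * inner u v"
    using assms(1)[rule_format, of u v] assms(2,3) by simp
  then show ?thesis
    using \<open>\<mu> \<noteq> \<nu>\<close> by simp
qed

lemma span_nonpos_eigenvectors_nonpos:
  fixes H :: "'v::real_inner \<Rightarrow> 'v"
  assumes "linear H" and self_adj: "\<forall>x y. inner (H x) y = inner x (H y)"
    and "finite S" and eig: "\<forall>v\<in>S. \<exists>\<mu>\<le>0. H v = \<mu> *\<^sub>R v"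
    and "w \<in> span S"
  shows "inner w (H w) \<le> 0"
proof -
  obtain \<mu> where \<mu>: "\<And>v. v \<in> S \<Longrightarrow> \<mu> v \<le> 0 \<and> H v = \<mu> v *\<^sub>R v"
    using eig by metis
  define r where "r v = sqrt (- \<mu> v)" for v
  \<comment> \<open>Eigenvectors of distinct eigenvalues are orthogonal, so on \<open>span S\<close>
    \<open>H = - R\<^sup>2\<close>, where \<open>R v = r v *\<^sub>R v\<close>.\<close>
  have key: "inner v (H v') = - (r v * r v') * inner v v'" if "v \<in> S" "v' \<in> S" for v v'
  proof (cases "\<mu> v = \<mu> v'")
    case True
    then show ?thesis
      using \<mu>[OF that(2)] by (simp add: r_def real_sqrt_mult[symmetric])
  next
    case False
    then show ?thesis
      using eigenvectors_orthogonal[OF self_adj] \<mu> that by (metis inner_scaleR_right mult_zero_right)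
  qed
  obtain u where w: "w = (\<Sum>v\<in>S. u v *\<^sub>R v)"
    using \<open>w \<in> span S\<close> span_finite[OF \<open>finite S\<close>] by auto
  have "inner w (H w) = (\<Sum>v\<in>S. \<Sum>v'\<in>S. u v * u v' * inner v (H v'))"
    unfolding w
    by (simp add: linear_sum[OF \<open>linear H\<close>] linear_scale[OF \<open>linear H\<close>] o_def
        inner_sum_left inner_sum_right sum_distrib_left, subst sum.swap) (simp add: mult_ac)
  also have "\<dots> = - inner (\<Sum>v\<in>S. (u v * r v) *\<^sub>R v) (\<Sum>v'\<in>S. (u v' * r v') *\<^sub>R v')"
    by (simp add: key inner_sum_left inner_sum_right sum_distrib_left sum_negf[symmetric] mult_ac
        inner_commute cong: sum.cong)
  also have "\<dots> \<le> 0"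
    by simp
  finally show ?thesis .
qed

lemma inner_opA:
  "inner (opA N H V w) x = (\<Sum>i<N. inner (V i) w * inner (H (V i)) x - inner (H (V i)) w * inner (V i) x)"
  by (simp add: opA_def inner_sum_left inner_diff_left)

lemma opA_skew: "inner (opA N H V w) x = - inner w (opA N H V x)"
proof -
  have "inner w (opA N H V x) = inner (opA N H V x) w"
    by (rule inner_commute)
  then show ?thesis
    by (simp add: inner_opA sum_subtractf mult.commute)
qed

lemma qo_half_step_increment:
  assumes "qo_half_step N H s U Uh" and "j < N"
  shows "Uh j - U j = - s *\<^sub>R opA N H (\<lambda>k. (1/2) *\<^sub>R (U k + Uh k)) ((1/2) *\<^sub>R (U j + Uh j))"
proof -
  from arg_cong[OF assms(1)[unfolded qo_half_step_def, rule_format, OF assms(2)], of "\<lambda>x. x - U j"]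
  show ?thesis
    by simp
qed

lemma qo_half_step_gram:
  assumes half: "qo_half_step N H s U Uh" and "i < N" "j < N"
  shows "inner (Uh i) (Uh j) = inner (U i) (U j)"
proof -
  define ut where "ut k = (1/2) *\<^sub>R (U k + Uh k)" for k
  have "inner (Uh i) (Uh j) - inner (U i) (U j) = inner (Uh i - U i) (ut j) + inner (ut i) (Uh j - U j)"
    unfolding ut_def by (simp add: inner_add_left inner_add_right inner_diff_left inner_diff_right
        inner_commute algebra_simps)
  also have "\<dots> = - s * (inner (opA N H ut (ut i)) (ut j) + inner (ut i) (opA N H ut (ut j)))"
    unfolding ut_def qo_half_step_increment[OF half \<open>i < N\<close>] qo_half_step_increment[OF half \<open>j < N\<close>]
    by (simp add: algebra_simps)
  also have "\<dots> = 0"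
    by (simp add: opA_skew)
  finally show ?thesis
    by simp
qed

lemma norm_lincomb_qo_half_step:
  assumes "qo_half_step N H s U Uh"
  shows "norm (lincomb N Uh c) = norm (lincomb N U c)"
proof -
  have "inner (lincomb N Uh c) (lincomb N Uh c) = inner (lincomb N U c) (lincomb N U c)"
    unfolding qform_gram[symmetric] gram_def
    by (intro sum.cong refl) (simp add: qo_half_step_gram[OF assms])
  then show ?thesis
    by (simp add: norm_eq_sqrt_inner)
qed

lemma qo_half_step_quasi_stiefel:
  assumes "qo_half_step N H s U Uh" and "quasi_stiefel N U"
  shows "quasi_stiefel N Uh"
proof -
  have "lincomb N Uh c = 0 \<longleftrightarrow> lincomb N U c = 0" for c
    using norm_lincomb_qo_half_step[OF assms(1), of c] by (metis norm_eq_zero)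
  then show ?thesis
    using assms(2) unfolding quasi_stiefel_def pd_gram_iff psd_id_minus_gram_iff
    by (simp add: norm_lincomb_qo_half_step[OF assms(1)])
qed

lemma qo_half_step_midpoint_contractive:
  assumes "qo_half_step N H s U Uh" and "psd N (\<lambda>i j. idm i j - gram N U U i j)"
  shows "(norm (lincomb N (\<lambda>k. (1/2) *\<^sub>R (U k + Uh k)) c))\<^sup>2 \<le> (\<Sum>i<N. (c i)\<^sup>2)"
proof -
  have "lincomb N (\<lambda>k. (1/2) *\<^sub>R (U k + Uh k)) c = (1/2) *\<^sub>R (lincomb N U c + lincomb N Uh c)"
    by (simp add: lincomb_def scaleR_add_right sum.distrib scaleR_sum_right)
  then have "norm (lincomb N (\<lambda>k. (1/2) *\<^sub>R (U k + Uh k)) c) \<le> norm (lincomb N U c)"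
    using norm_triangle_ineq[of "lincomb N U c" "lincomb N Uh c"]
    by (simp add: norm_lincomb_qo_half_step[OF assms(1)])
  then have "(norm (lincomb N (\<lambda>k. (1/2) *\<^sub>R (U k + Uh k)) c))\<^sup>2 \<le> (norm (lincomb N U c))\<^sup>2"
    by (rule power_mono) simp
  also have "\<dots> \<le> (\<Sum>i<N. (c i)\<^sup>2)"
    using assms(2) unfolding psd_id_minus_gram_iff by blast
  finally show ?thesis .
qed

lemma qo_half_step_normal_energy:
  fixes H :: "'v::real_inner \<Rightarrow> 'v"
  assumes self_adj: "\<forall>x y. inner (H x) y = inner x (H y)" and "H ` W \<subseteq> W"
    and U_W: "\<forall>j<N. U j \<in> W" and tangent: "\<forall>j<N. Uh j - z j \<in> W"
    and normal: "\<forall>j<N. \<forall>w\<in>W. inner (z j) w = 0"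
    and half: "qo_half_step N H s U Uh" and "j < N"
  defines "ut \<equiv> \<lambda>k. (1/2) *\<^sub>R (U k + Uh k)"
  shows "2 * inner (z j) (z j) =
    s * (\<Sum>i<N. inner (H (ut i)) (ut j) * inner (z i) (z j) - inner (ut i) (ut j) * inner (z i) (H (z j)))"
proof -
  have "inner (Uh i - z i) (z k) = 0" if "i < N" "k < N" for i k
    using normal tangent that by (metis inner_commute)
  then have Uh_z: "inner (Uh i) (z k) = inner (z i) (z k)" if "i < N" "k < N" for i k
    using that by (simp add: inner_diff_left)
  have ut_z: "inner (ut i) (z j) = (1/2) * inner (z i) (z j)" if "i < N" for i
    using U_W normal Uh_z that \<open>j < N\<close> unfolding ut_def
    by (simp add: inner_add_left inner_commute[of "U i"])
  have H_normal: "inner w (H (z j)) = 0" if "w \<in> W" for w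
    using normal self_adj \<open>H ` W \<subseteq> W\<close> that \<open>j < N\<close> by (metis image_subset_iff inner_commute)
  have "inner (Uh i) (H (z j)) = inner (z i) (H (z j))" if "i < N" for i
    using H_normal[OF tangent[rule_format, OF that]] by (simp add: inner_diff_left)
  then have H_ut_z: "inner (H (ut i)) (z j) = (1/2) * inner (z i) (H (z j))" if "i < N" for i
    using U_W H_normal that unfolding ut_def by (simp add: self_adj inner_add_left)
  have "inner (z j) (z j) = inner (Uh j - U j) (z j)"
    using Uh_z \<open>j < N\<close> U_W normal by (simp add: inner_diff_left inner_commute[of "U j"])
  also have "\<dots> = - s * inner (opA N H ut (ut j)) (z j)"
    unfolding ut_def qo_half_step_increment[OF half \<open>j < N\<close>] by simp
  finally have "2 * inner (z j) (z j) = - s * (2 * inner (opA N H ut (ut j)) (z j))"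
    by simp
  also have "2 * inner (opA N H ut (ut j)) (z j) =
      (\<Sum>i<N. inner (ut i) (ut j) * inner (z i) (H (z j)) - inner (H (ut i)) (ut j) * inner (z i) (z j))"
    unfolding inner_opA sum_distrib_left by (intro sum.cong refl) (simp add: ut_z H_ut_z algebra_simps)
  finally show ?thesis
    by (simp add: sum_subtractf right_diff_distrib)
qed

lemma qo_half_step_normal_component:
  fixes H :: "'v::real_inner \<Rightarrow> 'v"
  assumes "\<forall>x y. inner (H x) y = inner x (H y)" and "H ` W \<subseteq> W"
    and "\<forall>j<N. U j \<in> W" and "\<forall>j<N. Uh j - z j \<in> W"
    and "\<forall>j<N. \<forall>w\<in>W. inner (z j) w = 0"
    and "qo_half_step N H s U Uh"
  defines "ut \<equiv> \<lambda>k. (1/2) *\<^sub>R (U k + Uh k)"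
  shows "2 * (\<Sum>j<N. inner (z j) (z j)) =
    s * ((\<Sum>i<N. \<Sum>j<N. inner (H (ut i)) (ut j) * inner (z i) (z j))
       - (\<Sum>i<N. \<Sum>j<N. inner (ut i) (ut j) * inner (z i) (H (z j))))"
proof -
  have "2 * inner (z j) (z j) =
      s * (\<Sum>i<N. inner (H (ut i)) (ut j) * inner (z i) (z j) - inner (ut i) (ut j) * inner (z i) (H (z j)))"
    if "j < N" for j
    using qo_half_step_normal_energy[OF assms(1-6) that] unfolding ut_def .
  then have "2 * (\<Sum>j<N. inner (z j) (z j)) =
      s * (\<Sum>j<N. \<Sum>i<N. inner (H (ut i)) (ut j) * inner (z i) (z j)
        - inner (ut i) (ut j) * inner (z i) (H (z j)))"
    unfolding sum_distrib_left by (intro sum.cong) simp_all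
  then show ?thesis
    by (subst (asm) sum.swap) (simp only: sum_subtractf)
qed

lemma gram_pairing_spread_le:
  fixes H :: "'v::euclidean_space \<Rightarrow> 'v"
  assumes "linear H" and self_adj: "\<forall>x y. inner (H x) y = inner x (H y)"
    and lower: "\<forall>x. lam1 * inner x x \<le> inner x (H x)"
    and upper: "\<forall>x. inner x (H x) \<le> lammax * inner x x"
    and "lam1 \<le> lammax"
    and contractive: "\<forall>c. (norm (lincomb N p c))\<^sup>2 \<le> (\<Sum>i<N. (c i)\<^sup>2)"
  shows "(\<Sum>i<N. \<Sum>j<N. inner (H (p i)) (p j) * inner (z i) (z j))
       - (\<Sum>i<N. \<Sum>j<N. inner (p i) (p j) * inner (z i) (H (z j)))
     \<le> (lammax - lam1) * (\<Sum>j<N. inner (z j) (z j))"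
proof -
  define T where "T = (\<Sum>i<N. \<Sum>j<N. inner (p i) (p j) * inner (z i) (z j))"
  have "0 \<le> (\<Sum>i<N. \<Sum>j<N. inner (p i) (p j) * inner (z i) (H (z j) - lam1 *\<^sub>R z j))"
    using \<open>linear H\<close> lower
    by (intro gram_pairing_operator_nonneg) (auto intro: linear_compose_sub linear_compose_scale_right
        linear_ident simp: inner_diff_right)
  then have lower_pairing: "lam1 * T \<le> (\<Sum>i<N. \<Sum>j<N. inner (p i) (p j) * inner (z i) (H (z j)))"
    unfolding T_def by (simp add: inner_diff_right right_diff_distrib sum_subtractf sum_distrib_left mult_ac)
  have "0 \<le> (\<Sum>i<N. \<Sum>j<N. inner (z i) (z j) * inner (p i) (lammax *\<^sub>R p j - H (p j)))"
    using \<open>linear H\<close> upper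
    by (intro gram_pairing_operator_nonneg) (auto intro: linear_compose_sub linear_compose_scale_right
        linear_ident simp: inner_diff_right)
  then have upper_pairing: "(\<Sum>i<N. \<Sum>j<N. inner (H (p i)) (p j) * inner (z i) (z j)) \<le> lammax * T"
    unfolding T_def using self_adj
    by (simp add: inner_diff_right right_diff_distrib sum_subtractf sum_distrib_left mult_ac)
  have "0 \<le> (\<Sum>i<N. \<Sum>j<N. inner (z i) (z j) * (idm i j - gram N p p i j))"
    using contractive by (intro gram_pairing_nonneg) (simp add: qform_id_minus_gram)
  moreover have "(\<Sum>i<N. \<Sum>j<N. inner (z i) (z j) * idm i j) = (\<Sum>j<N. inner (z j) (z j))"
    by (intro sum.cong refl) (simp add: sum_idm)
  ultimately have "T \<le> (\<Sum>j<N. inner (z j) (z j))"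
    unfolding T_def by (simp add: right_diff_distrib sum_subtractf gram_def mult.commute)
  then have "(lammax - lam1) * T \<le> (lammax - lam1) * (\<Sum>j<N. inner (z j) (z j))"
    using \<open>lam1 \<le> lammax\<close> by (simp add: mult_left_mono)
  with lower_pairing upper_pairing show ?thesis
    by (simp add: left_diff_distrib)
qed

lemma qo_half_step_in_invariant_subspace:
  fixes H :: "'v::euclidean_space \<Rightarrow> 'v"
  assumes "linear H" and self_adj: "\<forall>x y. inner (H x) y = inner x (H y)"
    and "subspace W" and "H ` W \<subseteq> W"
    and lower: "\<forall>x. lam1 * inner x x \<le> inner x (H x)"
    and upper: "\<forall>x. inner x (H x) \<le> lammax * inner x x"
    and "lam1 \<le> lammax" and "0 < s" and step_size: "s * (lammax - lam1) < 2"
    and U_W: "\<forall>j<N. U j \<in> W" and "psd N (\<lambda>i j. idm i j - gram N U U i j)"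
    and half: "qo_half_step N H s U Uh"
  shows "\<forall>j<N. Uh j \<in> W"
proof -
  have "span W = W"
    using \<open>subspace W\<close> by simp
  then have "\<exists>z. Uh j - z \<in> W \<and> (\<forall>w\<in>W. inner z w = 0)" for j
    using orthogonal_subspace_decomp_exists[of W "Uh j"] unfolding orthogonal_def
    by (metis add_diff_cancel_right')
  then obtain z where tangent: "\<forall>j. Uh j - z j \<in> W" and normal: "\<forall>j. \<forall>w\<in>W. inner (z j) w = 0"
    by metis
  define ut where "ut k = (1/2) *\<^sub>R (U k + Uh k)" for k
  define Sz where "Sz = (\<Sum>j<N. inner (z j) (z j))"
  have "2 * Sz = s * ((\<Sum>i<N. \<Sum>j<N. inner (H (ut i)) (ut j) * inner (z i) (z j))
       - (\<Sum>i<N. \<Sum>j<N. inner (ut i) (ut j) * inner (z i) (H (z j))))"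
    unfolding Sz_def ut_def
    using qo_half_step_normal_component[OF self_adj \<open>H ` W \<subseteq> W\<close> U_W _ _ half] tangent normal by blast
  also have "\<dots> \<le> s * ((lammax - lam1) * Sz)"
    unfolding Sz_def using \<open>0 < s\<close>
    by (intro mult_left_mono gram_pairing_spread_le[OF \<open>linear H\<close> self_adj lower upper \<open>lam1 \<le> lammax\<close>])
      (auto simp: ut_def qo_half_step_midpoint_contractive[OF half \<open>psd N _\<close>])
  finally have "(2 - s * (lammax - lam1)) * Sz \<le> 0"
    by (simp add: left_diff_distrib mult.assoc)
  then have "Sz \<le> 0"
    using step_size by (simp add: mult_le_0_iff)
  moreover have "0 \<le> Sz"
    unfolding Sz_def by (simp add: sum_nonneg)
  ultimately have "Sz = 0"
    by simp
  then have "z j = 0" if "j < N" for j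
    using that unfolding Sz_def by (simp add: sum_nonneg_eq_0_iff)
  then show ?thesis
    using tangent by (metis diff_zero)
qed

lemma lincomb_qo_correction:
  assumes "linear H"
  shows "lincomb N (qo_correction N H s Uh) c =
    lincomb N Uh c - s *\<^sub>R H (lincomb N Uh c - lincomb N Uh (\<lambda>k. inner (Uh k) (lincomb N Uh c)))"
proof -
  have "lincomb N (qo_correction N H s Uh) c =
      lincomb N Uh c - s *\<^sub>R lincomb N (\<lambda>k. H (Uh k)) (\<lambda>k. \<Sum>j<N. (idm k j - gram N Uh Uh k j) * c j)"
    unfolding qo_correction_def[abs_def] lincomb_diff_scaleR lincomb_mat_act ..
  also have "lincomb N (\<lambda>k. H (Uh k)) (\<lambda>k. \<Sum>j<N. (idm k j - gram N Uh Uh k j) * c j) =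
      H (lincomb N Uh (\<lambda>k. c k - inner (Uh k) (lincomb N Uh c)))"
    unfolding lincomb_linear_image[OF assms]
    by (intro arg_cong[where f = H] lincomb_cong)
      (simp add: left_diff_distrib sum_subtractf mult.commute[of "idm _ _"] sum_idm gram_def
        inner_lincomb_right, simp add: mult.commute)
  finally show ?thesis
    by (simp add: lincomb_diff)
qed

lemma qo_correction_pd:
  fixes H :: "'v::real_inner \<Rightarrow> 'v"
  assumes "linear H" and self_adj: "\<forall>x y. inner (H x) y = inner x (H y)"
    and "subspace W" and "H ` W \<subseteq> W" and nonpos: "\<forall>w\<in>W. inner w (H w) \<le> 0"
    and Uh_W: "\<forall>j<N. Uh j \<in> W" and "quasi_stiefel N Uh" and "0 < s"
  shows "pd N (gram N (qo_correction N H s Uh) (qo_correction N H s Uh))"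
  unfolding pd_gram_iff
proof (intro allI impI)
  fix c i
  assume "lincomb N (qo_correction N H s Uh) c = 0" and "i < N"
  define a where "a = lincomb N Uh c"
  define b where "b = a - lincomb N Uh (\<lambda>k. inner (Uh k) a)"
  have a_eq: "a = s *\<^sub>R H b"
    using \<open>lincomb N (qo_correction N H s Uh) c = 0\<close>
    unfolding lincomb_qo_correction[OF \<open>linear H\<close>] a_def b_def by simp
  have "b \<in> W"
    unfolding b_def a_def using \<open>subspace W\<close> Uh_W by (intro subspace_diff lincomb_in_subspace)
  have "0 \<le> inner a b"
    unfolding b_def using \<open>quasi_stiefel N Uh\<close>
    by (intro inner_sub_frame_nonneg) (simp add: quasi_stiefel_def psd_id_minus_gram_iff)
  also have "inner a b = s * inner b (H b)"
    unfolding a_eq by (simp add: self_adj)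
  finally have "0 \<le> inner b (H b)"
    using \<open>0 < s\<close> by (simp add: zero_le_mult_iff)
  then have "inner b (H b) = 0"
    using nonpos \<open>b \<in> W\<close> by (simp add: order_antisym)
  then have "H b = 0"
    using psd_form_zero_imp_kernel[of "\<lambda>x. - H x" W b] linear_compose_neg[OF \<open>linear H\<close>]
      self_adj \<open>subspace W\<close> \<open>H ` W \<subseteq> W\<close> nonpos \<open>b \<in> W\<close>
    by (simp add: subspace_neg image_subset_iff)
  then have "lincomb N Uh c = 0"
    using a_eq unfolding a_def by simp
  then show "c i = 0"
    using \<open>quasi_stiefel N Uh\<close> \<open>i < N\<close> unfolding quasi_stiefel_def pd_gram_iff by blast
qed

lemma nonpos_eigenvalue_of_Max_rayleigh:
  fixes H :: "'v::real_inner \<Rightarrow> 'v" and Vs :: "nat \<Rightarrow> 'v set"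
  assumes "\<forall>j<N. finite (Vs j)" and "\<forall>j<N. \<forall>v\<in>Vs j. is_eigenvector H v"
    and "Max (\<Union>j<N. (\<lambda>v. inner v (H v) / inner v v) ` Vs j) \<le> 0"
  shows "\<forall>v\<in>(\<Union>j<N. Vs j). \<exists>\<mu>\<le>0. H v = \<mu> *\<^sub>R v"
proof
  fix v
  assume "v \<in> (\<Union>j<N. Vs j)"
  then obtain j where "j < N" "v \<in> Vs j"
    by blast
  then obtain \<mu> where "v \<noteq> 0" and \<mu>: "H v = \<mu> *\<^sub>R v"
    using assms(2) unfolding is_eigenvector_def by blast
  then have "\<mu> = inner v (H v) / inner v v"
    by simp
  also have "\<dots> \<le> Max (\<Union>j<N. (\<lambda>v. inner v (H v) / inner v v) ` Vs j)"
    using assms(1) \<open>j < N\<close> \<open>v \<in> Vs j\<close> by (intro Max_ge) auto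
  finally have "\<mu> \<le> 0"
    using assms(3) by linarith
  with \<mu> show "\<exists>\<mu>\<le>0. H v = \<mu> *\<^sub>R v"
    by blast
qed

theorem lemma3p3:
  fixes H :: "'v::euclidean_space \<Rightarrow> 'v"
    and N :: nat and lam1 lammax s :: real
    and Vs :: "nat \<Rightarrow> 'v set"
    and U Uh :: "nat \<Rightarrow> 'v"
  assumes lin: "linear H"
    and selfadj: "\<forall>x y. inner (H x) y = inner x (H y)"
    and lam1_eig: "is_eigenvalue H lam1" and lam1_min: "\<forall>\<mu>. is_eigenvalue H \<mu> \<longrightarrow> lam1 \<le> \<mu>"
    and lammax_eig: "is_eigenvalue H lammax" and lammax_max: "\<forall>\<mu>. is_eigenvalue H \<mu> \<longrightarrow> \<mu> \<le> lammax"
    and lam1_neg: "lam1 < 0"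
    and N_pos: "1 \<le> N"
    and Vs_fin: "\<forall>j<N. finite (Vs j) \<and> Vs j \<noteq> {}"
    and Vs_eig: "\<forall>j<N. \<forall>v\<in>Vs j. is_eigenvector H v"
    and lam0: "Max (\<Union>j<N. (\<lambda>v. inner v (H v) / inner v v) ` Vs j) \<le> 0"
    and U_V0: "\<forall>j<N. U j \<in> span (Vs j)"
    and U_qs: "quasi_stiefel N U"
    and s_pos: "0 < s"
    and s_small: "s * \<bar>lam1 - lammax\<bar> < 2"
    and half: "qo_half_step N H s U Uh"
  shows "pd N (gram N (qo_correction N H s Uh) (qo_correction N H s Uh))"
proof -
  define S where "S = (\<Union>j<N. Vs j)"
  have "finite S"
    unfolding S_def using Vs_fin by auto
  have S_eig: "\<forall>v\<in>S. \<exists>\<mu>\<le>0. H v = \<mu> *\<^sub>R v"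
    unfolding S_def using Vs_fin Vs_eig lam0 by (intro nonpos_eigenvalue_of_Max_rayleigh) auto
  have S_inv: "H ` span S \<subseteq> span S"
    using S_eig by (intro span_eigenvectors_invariant[OF lin]) blast
  have U_S: "\<forall>j<N. U j \<in> span S"
    using U_V0 span_mono[of "Vs _" S] unfolding S_def by blast
  have "lam1 \<le> lammax"
    using lam1_min lammax_eig by blast
  moreover from this have "s * (lammax - lam1) < 2"
    using s_small by simp
  ultimately have Uh_S: "\<forall>j<N. Uh j \<in> span S"
    using rayleigh_ge_min_eigenvalue[OF lin selfadj lam1_min]
      rayleigh_le_max_eigenvalue[OF lin selfadj lammax_max] U_qs
    unfolding quasi_stiefel_def
    by (intro qo_half_step_in_invariant_subspace[OF lin selfadj subspace_span S_inv _ _ _ s_pos _ U_S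
          _ half]) auto
  show ?thesis
    using span_nonpos_eigenvectors_nonpos[OF lin selfadj \<open>finite S\<close> S_eig]
    by (intro qo_correction_pd[OF lin selfadj subspace_span S_inv _ Uh_S
          qo_half_step_quasi_stiefel[OF half U_qs] s_pos]) blast
qed

end
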